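(* Let $n\ge 1$ and let $M$ be an $n\times n$ matrix with entries in $\mathbb{Z}_2$. Then $R(M)\le n-1$.
   Context: For an $n\times n$ matrix $M$ with entries in $\mathbb{Z}_2$, $R(M)$ denotes the minimal rank (over $\mathbb{Z}_2$) among all matrices obtained from $M$ by changing some (possibly none) of the entries on the main diagonal of $M$, i.e. $R(M)=\min\{\operatorname{rk}(M+D): D \text{ an } n\times n \text{ diagonal matrix over } \mathbb{Z}_2\}$. *)

theory Defs
  imports "HOL-Analysis.Analysis" "HOL-Library.Z2"
begin

definition is_diag :: "'a::zero^'n^'n \<Rightarrow> bool" where
  "is_diag D \<longleftrightarrow> (\<forall>i j. i \<noteq> j \<longrightarrow> D $ i $ j = 0)"

definition minrank_diag :: "bit^'n^'n \<Rightarrow> nat" where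
  "minrank_diag M = Min {rank (M + D) | D. is_diag D}"

end

theory Submission
  imports Defs
begin

text \<open>Choose the diagonal so that every column of \<open>M + D\<close> sums to zero; then the rows of
  \<open>M + D\<close> add up to the zero vector, so one row lies in the span of the others and the rank
  is at most \<open>n - 1\<close>.\<close>

lemma rows_eq_range: "rows A = range (\<lambda>i. A $ i)"
  by (auto simp: rows_def row_def vec_nth_inverse)

lemma rank_le_card_rows: "rank (A :: 'a::field^'n^'m) \<le> CARD('m)"
proof -
  have "rank A \<le> card (rows A)"
    unfolding row_rank_def_gen by (rule vec.dim_le_card') (simp add: rows_eq_range)
  also have "\<dots> \<le> CARD('m)"
    unfolding rows_eq_range by (rule card_image_le) simp
  finally show ?thesis .
qed

lemma rank_le_card_rows_minus_one_if_rows_sum_zero: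
  fixes A :: "'a::field^'n^'m"
  assumes rows_sum: "(\<Sum>i\<in>UNIV. A $ i) = 0"
  shows "rank A \<le> CARD('m) - 1"
proof -
  obtain i0 :: 'm where True by blast
  define S where "S = (\<lambda>i. A $ i) ` (UNIV - {i0})"
  have "A $ i0 = - (\<Sum>i\<in>UNIV - {i0}. A $ i)"
    using rows_sum sum.remove[of UNIV i0 "\<lambda>i. A $ i"]
    by (simp add: eq_neg_iff_add_eq_0 add.commute)
  also have "\<dots> \<in> vec.span S"
    unfolding S_def by (intro vec.span_neg vec.span_sum) (auto intro: vec.span_base)
  finally have "rows A \<subseteq> vec.span S"
    unfolding rows_eq_range S_def by (auto intro: vec.span_base)
  then have "rank A \<le> card S"
    unfolding row_rank_def_gen by (rule vec.dim_le_card) (simp add: S_def)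
  also have "\<dots> \<le> CARD('m) - 1"
    unfolding S_def using card_image_le[of "UNIV - {i0}" "\<lambda>i. A $ i"]
    by (simp add: card_Diff_singleton)
  finally show ?thesis .
qed

lemma exists_diag_column_sums_zero:
  fixes M :: "'a::ab_group_add^'n^'n"
  shows "\<exists>D. is_diag D \<and> (\<Sum>i\<in>UNIV. (M + D) $ i) = 0"
proof (intro exI conjI)
  define D :: "'a^'n^'n" where "D = (\<chi> i j. if i = j then - (\<Sum>k\<in>UNIV. M $ k $ j) else 0)"
  show "is_diag D"
    unfolding is_diag_def D_def by simp
  show "(\<Sum>i\<in>UNIV. (M + D) $ i) = 0"
    unfolding vec_eq_iff
  proof
    fix j
    have "(\<Sum>i\<in>UNIV. (M + D) $ i) $ j = (\<Sum>i\<in>UNIV. M $ i $ j) + (\<Sum>i\<in>UNIV. D $ i $ j)"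
      by (simp add: sum_component sum.distrib)
    also have "(\<Sum>i\<in>UNIV. D $ i $ j) = - (\<Sum>k\<in>UNIV. M $ k $ j)"
      unfolding D_def by (simp add: if_distrib sum.delta' cong: if_cong)
    finally show "(\<Sum>i\<in>UNIV. (M + D) $ i) $ j = 0 $ j" by simp
  qed
qed

theorem mainTheorem6:
  fixes M :: "bit^'n^'n"
  shows "minrank_diag M \<le> CARD('n) - 1"
proof -
  obtain D where D: "is_diag D" and rows_sum: "(\<Sum>i\<in>UNIV. (M + D) $ i) = 0"
    using exists_diag_column_sums_zero by blast
  have "finite {rank (M + D) |D. is_diag D}"
    by (rule finite_subset[of _ "{..CARD('n)}"]) (auto intro: rank_le_card_rows)
  then have "minrank_diag M \<le> rank (M + D)"
    unfolding minrank_diag_def using D by (auto intro: Min_le)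
  also have "\<dots> \<le> CARD('n) - 1"
    using rows_sum by (rule rank_le_card_rows_minus_one_if_rows_sum_zero)
  finally show ?thesis .
qed

end
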